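(* In the setting described in the context, assume $x_h^2\beta>3$ and $n>\frac1{2\alpha x_h^2\beta}-\frac1{x_h^2\beta}$, and let $\dot k=\frac1{2n}\log_\lambda\Big(\frac1{1+\frac1{\alpha\eta}(1-\lambda^2)}\Big)-1$. Then $$(\hat\sigma^1_{\lceil\dot k\rceil n+n})^2\le(1+2e^{\frac1{x_h^2\beta}})(\hat\lambda\lambda^{n-1})^2\frac1\alpha(\hat\lambda\lambda^{n-1})^{2\lceil\dot k\rceil},$$ and for every $r\in\{2,\dots,n\}$, $$(\hat\sigma^r_{\lceil\dot k\rceil n+n})^2\le6(\hat\lambda\lambda^{n-r})^2\frac1\alpha(\hat\lambda\lambda^{n-1})^{2\lceil\dot k\rceil}.$$
   Context: Fix $\alpha,\beta,x_h,c>0$ and an integer $n\ge2$. Model: $y=\theta x+\xi$, $\xi\sim\mathcal N(0,\beta^{-1})$, prior $\theta\sim\mathcal N(0,\alpha^{-1})$. Database $D_2$ consists of $n-1$ copies of $(x_h,cx_h)$ and one copy of $(x_h/2,cx_h/2)$. Cyclic SGLD with batch size 1 and step size $\eta=\frac2{(\alpha+nx_h^2\beta)^2}$: $\theta_0\sim\mathcal N(0,\alpha^{-1})$, $\theta_{j+1}=\theta_j+\frac\eta2[-\alpha\theta_j+n\beta(y_{i_j}-\theta_jx_{i_j})x_{i_j}]+\sqrt\eta\,\xi_j$ with $\xi_j\sim\mathcal N(0,1)$ i.i.d. independent of $\theta_0$; the database is shuffled once uniformly and its samples are then used cyclically. Let $r\in\{1,\dots,n\}$ be the position within each epoch at which $(x_h/2,cx_h/2)$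 is used; conditionally on $r$ the $j$-th iterate is $\hat\theta^r_j\sim\mathcal N(\hat\mu^r_j,(\hat\sigma^r_j)^2)$. Set $\lambda=1-\frac\eta2(\alpha+nx_h^2\beta)$, $\hat\lambda=1-\frac\eta2(\alpha+n\frac{x_h^2}4\beta)$. *)

theory Defs
  imports "HOL-Probability.Probability"
begin

definition sgld_eta :: "real \<Rightarrow> real \<Rightarrow> real \<Rightarrow> nat \<Rightarrow> real" where
  "sgld_eta \<alpha> \<beta> xh n = 2 / (\<alpha> + real n * xh\<^sup>2 * \<beta>)\<^sup>2"

definition sgld_lambda :: "real \<Rightarrow> real \<Rightarrow> real \<Rightarrow> nat \<Rightarrow> real" where
  "sgld_lambda \<alpha> \<beta> xh n = 1 - sgld_eta \<alpha> \<beta> xh n / 2 * (\<alpha> + real n * xh\<^sup>2 * \<beta>)"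

definition sgld_lambda_hat :: "real \<Rightarrow> real \<Rightarrow> real \<Rightarrow> nat \<Rightarrow> real" where
  "sgld_lambda_hat \<alpha> \<beta> xh n = 1 - sgld_eta \<alpha> \<beta> xh n / 2 * (\<alpha> + real n * (xh\<^sup>2 / 4) * \<beta>)"

text \<open>Input x used at iteration j (0-based) when the sample (xh/2, c xh/2) sits at
  position r in {1..n} of the (once shuffled) epoch; all other positions hold (xh, c xh).\<close>
definition sgld_x :: "real \<Rightarrow> nat \<Rightarrow> nat \<Rightarrow> nat \<Rightarrow> real" where
  "sgld_x xh n r j = (if j mod n + 1 = r then xh / 2 else xh)"

fun sgld_iter :: "real \<Rightarrow> real \<Rightarrow> real \<Rightarrow> real \<Rightarrow> nat \<Rightarrow> nat \<Rightarrow> real \<Rightarrow> (nat \<Rightarrow> real) \<Rightarrow> nat \<Rightarrow> real" where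
  "sgld_iter \<alpha> \<beta> xh c n r t0 xi 0 = t0"
| "sgld_iter \<alpha> \<beta> xh c n r t0 xi (Suc j) =
     (let \<theta> = sgld_iter \<alpha> \<beta> xh c n r t0 xi j;
          \<eta> = sgld_eta \<alpha> \<beta> xh n;
          x = sgld_x xh n r j;
          y = c * x
      in \<theta> + \<eta> / 2 * (- \<alpha> * \<theta> + real n * \<beta> * (y - \<theta> * x) * x) + sqrt \<eta> * xi j)"

end

theory Submission
  imports Defs
begin

(* The iterate is an affine function of the independent centred Gaussians theta_0, xi_0, xi_1, ...,
   so its variance obeys v_(j+1) = f_j^2 v_j + eta, v_0 = 1/alpha, where f_j is lambda-hat at the
   position of the halved sample and lambda elsewhere. Over one epoch this reads
   v_((k+1)n) = P v_(kn) + eta G_r with P = (lambda-hat lambda^(n-1))^2, so v_(kn) approaches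
   eta G_r/(1 - P) geometrically with ratio P. The choice of k-dot makes P^K at least
   alpha eta/(alpha eta + 1 - lambda^2), which reduces both bounds to
   G_r (alpha eta + 1 - lambda^2 - P alpha eta) <= c P (1 - P).
   Since G_1 = (1 - lambda^(2n))/(1 - lambda^2) and lambda^2 G_r <= G_1, everything rests on one
   elementary inequality in a = 1/A, w = n xh^2 beta/A and u = 1/(xh^2 beta), A = alpha + n xh^2 beta.
   Bernoulli's inequality and ln(1 - a) >= -a - 2a^2 turn it into a polynomial inequality on a box,
   certified by a Bernstein expansion with nonnegative coefficients. *)

section \<open>Variance of affine recursions with independent noise\<close>

lemma (in prob_space) indep_vars_integrable_mult_expectation:
  fixes Z :: "'i \<Rightarrow> 'a \<Rightarrow> real"
  assumes "indep_vars (\<lambda>_. borel) Z I" "i \<in> I" "k \<in> I" "i \<noteq> k"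
    and "integrable M (Z i)" "integrable M (Z k)"
  shows "integrable M (\<lambda>\<omega>. Z i \<omega> * Z k \<omega>)"
    and "expectation (\<lambda>\<omega>. Z i \<omega> * Z k \<omega>) = expectation (Z i) * expectation (Z k)"
proof -
  have ind: "indep_vars (\<lambda>_. borel) Z {i, k}"
    by (rule indep_vars_subset[OF assms(1)]) (use assms(2,3) in auto)
  have "integrable M (\<lambda>\<omega>. \<Prod>l\<in>{i, k}. Z l \<omega>)"
    using ind assms(5,6) by (intro indep_vars_integrable) auto
  then show "integrable M (\<lambda>\<omega>. Z i \<omega> * Z k \<omega>)" using assms(4) by simp
  have "expectation (\<lambda>\<omega>. \<Prod>l\<in>{i, k}. Z l \<omega>) = (\<Prod>l\<in>{i, k}. expectation (Z l))"
    using ind assms(5,6) by (intro indep_vars_lebesgue_integral) auto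
  then show "expectation (\<lambda>\<omega>. Z i \<omega> * Z k \<omega>) = expectation (Z i) * expectation (Z k)"
    using assms(4) by simp
qed

lemma (in prob_space) variance_indep_linear_combination:
  fixes Z :: "'i \<Rightarrow> 'a \<Rightarrow> real"
  assumes fin: "finite I" and ind: "indep_vars (\<lambda>_. borel) Z I"
    and int: "\<And>i. i \<in> I \<Longrightarrow> integrable M (Z i)"
    and int2: "\<And>i. i \<in> I \<Longrightarrow> integrable M (\<lambda>\<omega>. (Z i \<omega>)\<^sup>2)"
    and mean: "\<And>i. i \<in> I \<Longrightarrow> expectation (Z i) = 0"
  shows "variance (\<lambda>\<omega>. (\<Sum>i\<in>I. c i * Z i \<omega>) + b)
       = (\<Sum>i\<in>I. (c i)\<^sup>2 * expectation (\<lambda>\<omega>. (Z i \<omega>)\<^sup>2))"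
proof -
  have int_mult: "integrable M (\<lambda>\<omega>. Z i \<omega> * Z k \<omega>)" if "i \<in> I" "k \<in> I" for i k
    using int2[of i] int that indep_vars_integrable_mult_expectation(1)[OF ind]
    by (cases "i = k") (auto simp: power2_eq_square)
  have exp_mult: "expectation (\<lambda>\<omega>. Z i \<omega> * Z k \<omega>)
      = (if i = k then expectation (\<lambda>\<omega>. (Z i \<omega>)\<^sup>2) else 0)" if "i \<in> I" "k \<in> I" for i k
    using int mean that indep_vars_integrable_mult_expectation(2)[OF ind]
    by (cases "i = k") (auto simp: power2_eq_square)
  have "expectation (\<lambda>\<omega>. (\<Sum>i\<in>I. c i * Z i \<omega>) + b) = (\<Sum>i\<in>I. c i * expectation (Z i)) + b"
    using int by (simp add: Bochner_Integration.integral_add Bochner_Integration.integral_sum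
        Bochner_Integration.integrable_sum prob_space)
  also have "\<dots> = b" using mean by simp
  finally have mean_b: "expectation (\<lambda>\<omega>. (\<Sum>i\<in>I. c i * Z i \<omega>) + b) = b" .
  have square_expand: "\<And>\<omega>. ((\<Sum>i\<in>I. c i * Z i \<omega>) + b - b)\<^sup>2 = (\<Sum>i\<in>I. \<Sum>k\<in>I. c i * c k * (Z i \<omega> * Z k \<omega>))"
    by (simp add: power2_eq_square sum_product algebra_simps)
  have "variance (\<lambda>\<omega>. (\<Sum>i\<in>I. c i * Z i \<omega>) + b)
      = expectation (\<lambda>\<omega>. \<Sum>i\<in>I. \<Sum>k\<in>I. c i * c k * (Z i \<omega> * Z k \<omega>))"
    unfolding mean_b square_expand by (rule refl)
  also have "\<dots> = (\<Sum>i\<in>I. \<Sum>k\<in>I. c i * c k * expectation (\<lambda>\<omega>. Z i \<omega> * Z k \<omega>))"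
    using int_mult by (simp add: Bochner_Integration.integral_sum Bochner_Integration.integrable_sum)
  also have "\<dots> = (\<Sum>i\<in>I. \<Sum>k\<in>I. if i = k then c i * c k * expectation (\<lambda>\<omega>. (Z i \<omega>)\<^sup>2) else 0)"
    by (intro sum.cong refl) (simp add: exp_mult)
  also have "\<dots> = (\<Sum>i\<in>I. (c i)\<^sup>2 * expectation (\<lambda>\<omega>. (Z i \<omega>)\<^sup>2))"
    using fin by (simp add: sum.delta power2_eq_square)
  finally show ?thesis .
qed

lemma (in prob_space) normal_distributed_moments:
  assumes "0 < \<sigma>" and X: "distributed M lborel X (normal_density 0 \<sigma>)"
  shows "integrable M X" "integrable M (\<lambda>\<omega>. (X \<omega>)\<^sup>2)"
    and "expectation X = 0" "expectation (\<lambda>\<omega>. (X \<omega>)\<^sup>2) = \<sigma>\<^sup>2"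
proof -
  show "integrable M X"
    using distributed_integrable_var[OF X] integrable_normal_moment_nz_1[OF assms(1)] by simp
  show "integrable M (\<lambda>\<omega>. (X \<omega>)\<^sup>2)"
    using distributed_integrable[OF X, of "\<lambda>x. x\<^sup>2"]
      integrable_normal_moment[OF assms(1), where \<mu>=0 and k=2] by simp
  show "expectation X = 0" by (rule normal_distributed_expectation[OF assms])
  then show "expectation (\<lambda>\<omega>. (X \<omega>)\<^sup>2) = \<sigma>\<^sup>2"
    using normal_distributed_variance[OF assms] by simp
qed

definition affine_inputs :: "nat \<Rightarrow> nat option set" where
  "affine_inputs j = insert None (Some ` {..<j})"

lemma finite_affine_inputs: "finite (affine_inputs j)"
  and affine_inputs_Suc: "affine_inputs (Suc j) = insert (Some j) (affine_inputs j)"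
  and Some_notin_affine_inputs: "Some j \<notin> affine_inputs j"
  by (auto simp: affine_inputs_def lessThan_Suc)

fun affine_coeff :: "(nat \<Rightarrow> real) \<Rightarrow> real \<Rightarrow> nat \<Rightarrow> nat option \<Rightarrow> real" where
  "affine_coeff f s 0 i = (if i = None then 1 else 0)"
| "affine_coeff f s (Suc j) i = (if i = Some j then s else f j * affine_coeff f s j i)"

fun affine_offset :: "(nat \<Rightarrow> real) \<Rightarrow> (nat \<Rightarrow> real) \<Rightarrow> nat \<Rightarrow> real" where
  "affine_offset f g 0 = 0"
| "affine_offset f g (Suc j) = f j * affine_offset f g j + g j"

fun var_seq :: "(nat \<Rightarrow> real) \<Rightarrow> real \<Rightarrow> real \<Rightarrow> nat \<Rightarrow> real" where
  "var_seq f v e 0 = v"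
| "var_seq f v e (Suc j) = (f j)\<^sup>2 * var_seq f v e j + e"

lemma affine_recursion_expand:
  assumes step: "\<And>j. x (Suc j) = f j * x j + g j + s * z j"
  shows "x j = (\<Sum>i\<in>affine_inputs j. affine_coeff f s j i * case_option (x 0) z i)
              + affine_offset f g j"
proof (induction j)
  case 0
  show ?case by (simp add: affine_inputs_def)
next
  case (Suc j)
  have "(\<Sum>i\<in>affine_inputs (Suc j). affine_coeff f s (Suc j) i * case_option (x 0) z i)
     = s * z j + f j * (\<Sum>i\<in>affine_inputs j. affine_coeff f s j i * case_option (x 0) z i)"
    using finite_affine_inputs Some_notin_affine_inputs
    by (auto simp: affine_inputs_Suc sum_distrib_left mult.assoc intro!: sum.cong)
  then show ?case using Suc.IH step[of j] by (simp add: algebra_simps)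
qed

lemma sum_sq_affine_coeff:
  "(\<Sum>i\<in>affine_inputs j. (affine_coeff f s j i)\<^sup>2 * case_option v (\<lambda>_. 1) i) = var_seq f v (s\<^sup>2) j"
proof (induction j)
  case 0
  show ?case by (simp add: affine_inputs_def)
next
  case (Suc j)
  have "(\<Sum>i\<in>affine_inputs (Suc j). (affine_coeff f s (Suc j) i)\<^sup>2 * case_option v (\<lambda>_. 1) i)
     = s\<^sup>2 + (f j)\<^sup>2 * (\<Sum>i\<in>affine_inputs j. (affine_coeff f s j i)\<^sup>2 * case_option v (\<lambda>_. 1) i)"
    using finite_affine_inputs Some_notin_affine_inputs
    by (auto simp: affine_inputs_Suc sum_distrib_left power_mult_distrib intro!: sum.cong)
  then show ?case using Suc.IH by simp
qed

lemma var_seq_nonneg: "0 \<le> v \<Longrightarrow> 0 \<le> e \<Longrightarrow> 0 \<le> var_seq f v e m"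
  by (induction m) auto

lemma var_seq_add:
  "var_seq f v e (k + m) = (\<Prod>j<m. (f (k + j))\<^sup>2) * var_seq f v e k + e * var_seq (\<lambda>j. f (k + j)) 0 1 m"
  by (induction m) (simp_all add: algebra_simps)

lemma var_seq_cong: "(\<And>j. j < m \<Longrightarrow> f j = g j) \<Longrightarrow> var_seq f v e m = var_seq g v e m"
  by (induction m) auto

lemma var_seq_zero_cong:
  "(\<And>j. 0 < j \<Longrightarrow> j < m \<Longrightarrow> f j = g j) \<Longrightarrow> var_seq f 0 e m = var_seq g 0 e m"
proof (induction m)
  case (Suc m)
  then have "var_seq f 0 e m = var_seq g 0 e m" by simp
  then show ?case using Suc.prems[of m] by (cases "m = 0") simp_all
qed simp

lemma var_seq_const: "var_seq (\<lambda>_. l) 0 1 m * (1 - l\<^sup>2) = 1 - l ^ (2 * m)"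
proof (induction m)
  case (Suc m)
  have "var_seq (\<lambda>_. l) 0 1 (Suc m) * (1 - l\<^sup>2) = l\<^sup>2 * (var_seq (\<lambda>_. l) 0 1 m * (1 - l\<^sup>2)) + (1 - l\<^sup>2)"
    by (simp add: algebra_simps)
  then show ?case unfolding Suc by (simp add: algebra_simps power_mult power2_eq_square)
qed simp

lemma geometric_recursion_closed_form:
  fixes V :: "nat \<Rightarrow> real"
  assumes "\<And>k. V (Suc k) = p * V k + g" and "p \<noteq> 1"
  shows "V k = p ^ k * (V 0 - g / (1 - p)) + g / (1 - p)"
proof (induction k)
  case (Suc k)
  define q where "q = g / (1 - p)"
  have "V (Suc k) = p * (p ^ k * (V 0 - q) + q) + g" using Suc assms(1) by (simp add: q_def)
  also have "\<dots> = p ^ Suc k * (V 0 - q) + (p * q + g)" by (simp add: algebra_simps)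
  also have "p * q + g = q" using \<open>p \<noteq> 1\<close> by (simp add: q_def field_simps)
  finally show ?case by (simp add: q_def)
qed simp

section \<open>Cyclic step factors\<close>

definition cyclic_factor :: "nat \<Rightarrow> nat \<Rightarrow> real \<Rightarrow> real \<Rightarrow> nat \<Rightarrow> real" where
  "cyclic_factor n r lh l j = (if j mod n + 1 = r then lh else l)"

lemma cyclic_factor_periodic: "cyclic_factor n r lh l (k * n + j) = cyclic_factor n r lh l j"
  by (simp add: cyclic_factor_def)

lemma prod_cyclic_factor:
  assumes "1 \<le> r" "r \<le> n"
  shows "(\<Prod>j<n. (cyclic_factor n r lh l j)\<^sup>2) = (lh * l ^ (n - 1))\<^sup>2"
proof -
  have r: "r - 1 \<in> {..<n}" using assms by auto
  have "(\<Prod>j<n. (cyclic_factor n r lh l j)\<^sup>2)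
      = (cyclic_factor n r lh l (r - 1))\<^sup>2 * (\<Prod>j\<in>{..<n} - {r - 1}. (cyclic_factor n r lh l j)\<^sup>2)"
    using r by (simp add: prod.remove)
  also have "(\<Prod>j\<in>{..<n} - {r - 1}. (cyclic_factor n r lh l j)\<^sup>2) = (\<Prod>j\<in>{..<n} - {r - 1}. l\<^sup>2)"
    by (rule prod.cong) (auto simp: cyclic_factor_def)
  also have "\<dots> = (l\<^sup>2) ^ (n - 1)" using r by (simp add: card_Diff_singleton)
  finally show ?thesis using assms
    by (simp add: cyclic_factor_def power_mult_distrib flip: power_mult) (simp add: mult.commute)
qed

lemma cyclic_variance_closed_form:
  assumes "1 \<le> r" "r \<le> n" and "(lh * l ^ (n - 1))\<^sup>2 \<noteq> 1"
  defines "P \<equiv> (lh * l ^ (n - 1))\<^sup>2" and "G \<equiv> var_seq (cyclic_factor n r lh l) 0 1 n"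
  shows "var_seq (cyclic_factor n r lh l) v e (K * n + n)
       = P ^ Suc K * (v - e * G / (1 - P)) + e * G / (1 - P)"
proof -
  define V where "V k = var_seq (cyclic_factor n r lh l) v e (k * n)" for k
  have "V (Suc k) = P * V k + e * G" for k
    using var_seq_add[of "cyclic_factor n r lh l" v e "k * n" n]
    unfolding cyclic_factor_periodic prod_cyclic_factor[OF assms(1,2)]
    by (simp add: V_def P_def G_def add.commute)
  from geometric_recursion_closed_form[of V P "e * G" "Suc K", OF this] assms(3)
  show ?thesis by (simp add: V_def P_def add.commute)
qed

lemma cyclic_first_variance:
  assumes "m \<le> n"
  shows "var_seq (cyclic_factor n 1 lh l) 0 e m = var_seq (\<lambda>_. l) 0 e m"
  using assms by (intro var_seq_zero_cong) (simp add: cyclic_factor_def)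

lemma cyclic_variance_le:
  assumes "1 \<le> r" "m \<le> n" and "0 < l" "l \<le> 1" "lh\<^sup>2 \<le> 1"
  shows "l\<^sup>2 * var_seq (cyclic_factor n r lh l) 0 1 m \<le> var_seq (\<lambda>_. l) 0 1 m"
  using assms(2)
proof (induction m)
  case (Suc m)
  let ?G = "var_seq (cyclic_factor n r lh l) 0 1" and ?H = "var_seq (\<lambda>_. l) 0 1"
  have l2: "l\<^sup>2 \<le> 1" using assms by (simp add: power_le_one)
  have H_Suc: "?H (Suc m) = l\<^sup>2 * ?H m + 1" by simp
  show ?case
  proof (cases "m + 1 = r")
    case True
    then have "cyclic_factor n r lh l m = lh"
      using Suc.prems by (simp add: cyclic_factor_def)
    moreover have "?G m = ?H m"
      using True Suc.prems by (intro var_seq_cong) (simp add: cyclic_factor_def)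
    ultimately have "l\<^sup>2 * ?G (Suc m) = l\<^sup>2 * (lh\<^sup>2 * ?H m) + l\<^sup>2"
      by (simp add: algebra_simps)
    moreover have "lh\<^sup>2 * ?H m \<le> ?H m"
      using assms(5) by (intro mult_left_le_one_le var_seq_nonneg) auto
    ultimately show ?thesis using H_Suc l2 mult_left_mono[of _ _ "l\<^sup>2"] by fastforce
  next
    case False
    then have "cyclic_factor n r lh l m = l"
      using Suc.prems by (simp add: cyclic_factor_def)
    then have "l\<^sup>2 * ?G (Suc m) = l\<^sup>2 * (l\<^sup>2 * ?G m) + l\<^sup>2"
      by (simp add: algebra_simps)
    moreover have "l\<^sup>2 * (l\<^sup>2 * ?G m) \<le> l\<^sup>2 * ?H m"
      using Suc by (intro mult_left_mono) auto
    ultimately show ?thesis using H_Suc l2 by linarith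
  qed
qed simp

lemma sgld_iter_step:
  "sgld_iter \<alpha> \<beta> xh c n r t0 xi (Suc j)
     = cyclic_factor n r (sgld_lambda_hat \<alpha> \<beta> xh n) (sgld_lambda \<alpha> \<beta> xh n) j
         * sgld_iter \<alpha> \<beta> xh c n r t0 xi j
       + sgld_eta \<alpha> \<beta> xh n / 2 * (real n * \<beta> * c * (sgld_x xh n r j)\<^sup>2)
       + sqrt (sgld_eta \<alpha> \<beta> xh n) * xi j"
  by (cases "j mod n + 1 = r")
    (simp_all add: Let_def cyclic_factor_def sgld_x_def sgld_lambda_def sgld_lambda_hat_def
      power2_eq_square algebra_simps)

lemma sgld_variance:
  fixes M :: "'w measure" and \<theta>0 :: "'w \<Rightarrow> real" and \<xi> :: "nat \<Rightarrow> 'w \<Rightarrow> real"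
  assumes "\<alpha> > 0" and "prob_space M"
    and init: "distributed M lborel \<theta>0 (normal_density 0 (1 / sqrt \<alpha>))"
    and noise: "\<And>j. distributed M lborel (\<xi> j) (normal_density 0 1)"
    and indep: "prob_space.indep_vars M (\<lambda>_. borel)
                  (\<lambda>i. case i of None \<Rightarrow> \<theta>0 | Some j \<Rightarrow> \<xi> j) UNIV"
  shows "prob_space.variance M (\<lambda>\<omega>. sgld_iter \<alpha> \<beta> xh c n r (\<theta>0 \<omega>) (\<lambda>j. \<xi> j \<omega>) N)
     = var_seq (cyclic_factor n r (sgld_lambda_hat \<alpha> \<beta> xh n) (sgld_lambda \<alpha> \<beta> xh n))
         (1 / \<alpha>) (sgld_eta \<alpha> \<beta> xh n) N"
proof -
  interpret prob_space M by fact
  define Z where "Z = (\<lambda>i. case i of None \<Rightarrow> \<theta>0 | Some j \<Rightarrow> \<xi> j)"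
  let ?f = "cyclic_factor n r (sgld_lambda_hat \<alpha> \<beta> xh n) (sgld_lambda \<alpha> \<beta> xh n)"
  let ?s = "sqrt (sgld_eta \<alpha> \<beta> xh n)"
  have "0 < 1 / sqrt \<alpha>" using \<open>\<alpha> > 0\<close> by simp
  note init_moments = normal_distributed_moments[OF this init]
    and noise_moments = normal_distributed_moments[OF zero_less_one noise]
  have "sgld_iter \<alpha> \<beta> xh c n r (\<theta>0 \<omega>) (\<lambda>j. \<xi> j \<omega>) N
      = (\<Sum>i\<in>affine_inputs N. affine_coeff ?f ?s N i * Z i \<omega>)
        + affine_offset ?f (\<lambda>j. sgld_eta \<alpha> \<beta> xh n / 2 * (real n * \<beta> * c * (sgld_x xh n r j)\<^sup>2)) N"
    for \<omega>
    using affine_recursion_expand[where x = "\<lambda>j. sgld_iter \<alpha> \<beta> xh c n r (\<theta>0 \<omega>) (\<lambda>j. \<xi> j \<omega>) j",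
        OF sgld_iter_step, where j = N]
    by (simp add: Z_def option.case_distrib[where h = "\<lambda>g. g \<omega>"] cong: option.case_cong)
  then have "variance (\<lambda>\<omega>. sgld_iter \<alpha> \<beta> xh c n r (\<theta>0 \<omega>) (\<lambda>j. \<xi> j \<omega>) N)
      = variance (\<lambda>\<omega>. (\<Sum>i\<in>affine_inputs N. affine_coeff ?f ?s N i * Z i \<omega>)
        + affine_offset ?f (\<lambda>j. sgld_eta \<alpha> \<beta> xh n / 2 * (real n * \<beta> * c * (sgld_x xh n r j)\<^sup>2)) N)"
    by (simp only:)
  also have "\<dots> = (\<Sum>i\<in>affine_inputs N. (affine_coeff ?f ?s N i)\<^sup>2
                                * expectation (\<lambda>\<omega>. (Z i \<omega>)\<^sup>2))"
    using init_moments noise_moments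
    by (intro variance_indep_linear_combination finite_affine_inputs
        indep_vars_subset[OF indep[folded Z_def]]) (auto simp: Z_def split: option.split)
  also have "\<dots> = (\<Sum>i\<in>affine_inputs N. (affine_coeff ?f ?s N i)\<^sup>2 * case_option (1 / \<alpha>) (\<lambda>_. 1) i)"
    using init_moments noise_moments \<open>\<alpha> > 0\<close>
    by (intro sum.cong refl) (auto simp: Z_def power_divide split: option.split)
  also have "\<dots> = var_seq ?f (1 / \<alpha>) (sgld_eta \<alpha> \<beta> xh n) N"
    by (simp add: sum_sq_affine_coeff sgld_eta_def)
  finally show ?thesis .
qed

lemma transient_variance_bound:
  fixes \<alpha> \<eta> l P G c :: real
  assumes "0 < P" "P < 1" "0 < \<alpha>" "0 < \<eta>" "0 \<le> G" "l\<^sup>2 < 1" "0 \<le> c"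
    and start: "1 / (1 + 1 / (\<alpha> * \<eta>) * (1 - l\<^sup>2)) \<le> P ^ K"
    and key: "G * (\<alpha> * \<eta> + 1 - l\<^sup>2 - P * \<alpha> * \<eta>) \<le> c * P * (1 - P)"
  shows "P ^ Suc K * (1 / \<alpha> - \<eta> * G / (1 - P)) + \<eta> * G / (1 - P) \<le> (1 + c) * P * (1 / \<alpha>) * P ^ K"
proof -
  define D where "D = \<alpha> * \<eta> + 1 - l\<^sup>2"
  define v where "v = \<eta> * G / (1 - P)"
  have "0 < \<alpha> * \<eta>" using assms by simp
  then have "0 < D" unfolding D_def using \<open>l\<^sup>2 < 1\<close> by linarith
  have "0 \<le> v" using assms by (simp add: v_def)
  have X: "1 / (1 + 1 / (\<alpha> * \<eta>) * (1 - l\<^sup>2)) = \<alpha> * \<eta> / D"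
    using assms by (simp add: D_def field_simps)
  have PX: "P * (\<alpha> * \<eta> / D) \<le> P ^ Suc K"
    using mult_left_mono[OF start[unfolded X], of P] assms(1) by simp
  have "\<alpha> * v * (1 - P ^ Suc K) \<le> \<alpha> * v * (1 - P * (\<alpha> * \<eta> / D))"
    using PX \<open>0 \<le> v\<close> assms(3) by (intro mult_left_mono) auto
  also have "\<dots> = \<alpha> * \<eta> / D * (G * (D - P * \<alpha> * \<eta>)) / (1 - P)"
    using \<open>0 < D\<close> assms(2) by (simp add: v_def field_simps)
  also have "\<dots> \<le> \<alpha> * \<eta> / D * (c * P * (1 - P)) / (1 - P)"
    using key assms \<open>0 < D\<close> by (intro divide_right_mono mult_left_mono) (auto simp: D_def)
  also have "\<dots> = c * (P * (\<alpha> * \<eta> / D))" using assms(2) by simp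
  also have "\<dots> \<le> c * P ^ Suc K" using PX assms(7) by (rule mult_left_mono)
  finally have "v * (1 - P ^ Suc K) \<le> c * P ^ Suc K / \<alpha>"
    using assms(3) by (simp add: field_simps)
  then have "P ^ Suc K * (1 / \<alpha> - v) + v \<le> P ^ Suc K / \<alpha> + c * P ^ Suc K / \<alpha>"
    by (simp add: algebra_simps)
  also have "\<dots> = (1 + c) * P * (1 / \<alpha>) * P ^ K" by (simp add: algebra_simps add_divide_distrib)
  finally show ?thesis unfolding v_def .
qed

lemma cyclic_variance_bound:
  fixes \<alpha> \<eta> l lh c :: real and n r K :: nat
  assumes "0 < \<alpha>" "0 < \<eta>" "0 < l" "l < 1" "0 < lh" "lh \<le> 1" "1 \<le> r" "r \<le> n" "2 \<le> n" "0 \<le> c"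
    and start: "1 / (1 + 1 / (\<alpha> * \<eta>) * (1 - l\<^sup>2)) \<le> (lh * l ^ (n - 1)) ^ (2 * K)"
    and key: "var_seq (cyclic_factor n r lh l) 0 1 n
                * (\<alpha> * \<eta> + 1 - l\<^sup>2 - (lh * l ^ (n - 1))\<^sup>2 * \<alpha> * \<eta>)
              \<le> c * (lh * l ^ (n - 1))\<^sup>2 * (1 - (lh * l ^ (n - 1))\<^sup>2)"
  shows "var_seq (cyclic_factor n r lh l) (1 / \<alpha>) \<eta> (K * n + n)
       \<le> (1 + c) * (lh * l ^ (n - 1))\<^sup>2 * (1 / \<alpha>) * (lh * l ^ (n - 1)) ^ (2 * K)"
proof -
  define P where "P = (lh * l ^ (n - 1))\<^sup>2"
  have "l ^ (n - 1) < 1" using assms(3,4,9) by (simp add: power_less_one_iff)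
  then have "lh * l ^ (n - 1) < 1"
    using assms(3,5,6) mult_le_less_imp_less[of lh 1 "l ^ (n - 1)" 1] by simp
  then have P: "0 < P" "P < 1" using assms(3,5) by (simp_all add: P_def power_less_one_iff)
  have "l\<^sup>2 < 1" using assms(3,4) by (simp add: power_less_one_iff)
  moreover have "(lh * l ^ (n - 1)) ^ (2 * K) = P ^ K" by (simp add: P_def power_mult)
  moreover have "0 \<le> var_seq (cyclic_factor n r lh l) 0 1 n" by (rule var_seq_nonneg) auto
  ultimately show ?thesis
    using cyclic_variance_closed_form[OF assms(7,8), of lh l "1 / \<alpha>" \<eta> K] P
      transient_variance_bound[OF P assms(1,2) _ _ assms(10)] start key
    by (simp add: P_def)
qed

section \<open>Elementary inequalities\<close>

lemma le_power_nat_ceiling_log: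
  fixes l X :: real and n :: nat
  assumes "0 < l" "l < 1" "0 < X" "X < 1" "0 < n"
  shows "X \<le> l ^ (2 * n * nat \<lceil>1 / (2 * real n) * log l X - 1\<rceil>)"
proof -
  define K where "K = nat \<lceil>1 / (2 * real n) * log l X - 1\<rceil>"
  have "0 < log l X" using assms by (simp add: log_def divide_neg_neg)
  then have "0 < 1 / (2 * real n) * log l X" using assms(5) by simp
  then have "real K = of_int \<lceil>1 / (2 * real n) * log l X - 1\<rceil>" unfolding K_def by simp
  then have "real K < 1 / (2 * real n) * log l X - 1 + 1" by linarith
  then have "2 * real n * real K \<le> log l X" using assms(5) by (simp add: field_simps)
  then have "l powr log l X \<le> l powr (2 * real n * real K)"
    using assms by (intro powr_mono') auto
  then show ?thesis using assms by (simp add: K_def powr_realpow[symmetric])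
qed

lemma exp_le_five_halves: "u \<le> 1 / 3 \<Longrightarrow> exp u \<le> (5 / 2 :: real)"
proof (rule ccontr)
  assume "u \<le> 1 / 3" "\<not> exp u \<le> 5 / 2"
  then have "(5 / 2 :: real) ^ 3 < exp u ^ 3" by (intro power_strict_mono) auto
  also have "exp u ^ 3 = exp (3 * u)" using exp_of_nat_mult[of 3 u] by simp
  also have "\<dots> \<le> exp 1" using \<open>u \<le> 1 / 3\<close> by simp
  also have "\<dots> \<le> 3" by (rule exp_le)
  finally show False by (simp add: power3_eq_cube)
qed

lemma square_mult_power_le:
  fixes l h :: real
  assumes "0 < l" "l \<le> 1" "0 \<le> h" "2 \<le> r" "r \<le> n"
  shows "(h * l ^ (n - 1))\<^sup>2 \<le> (h * l ^ (n - r))\<^sup>2 * l\<^sup>2"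
proof -
  have n_split: "n - 1 = (n - r) + Suc (r - 2)" using assms by simp
  have "l ^ (n - 1) = l ^ (n - r) * l * l ^ (r - 2)"
    unfolding n_split power_add power_Suc by (simp only: mult.assoc)
  also have "\<dots> \<le> l ^ (n - r) * l"
    using assms mult_left_le[of "l ^ (r - 2)" "l ^ (n - r) * l"] by (simp add: power_le_one)
  finally have "h * l ^ (n - 1) \<le> h * l ^ (n - r) * l"
    using assms(3) mult_left_mono by (simp add: mult.assoc)
  moreover have "0 \<le> h * l ^ (n - 1)" using assms by simp
  ultimately show ?thesis by (metis power_mono power_mult_distrib)
qed

lemma key_polynomial_inequality:
  fixes u w m :: real
  assumes "0 \<le> u" "u \<le> 1/3" "0 \<le> w" "w \<le> 1" "0 \<le> m" "m \<le> 1/2"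
  defines "a \<equiv> u * w * m"
  shows "3/2 * w * m * (1 - a)
    \<le> (2 - m/2 - 9*m*w/8)
        * (2 * (1 + u - 2*u*w - 4*u*w*a + 2*a + 4*a\<^sup>2) * (1 - 2*a + 3/2*a*w) - 1 - 24/11*(1 - w)*u*w)"
proof -
  let ?y = "3 * u" and ?v = "2 * m"
  \<comment> \<open>Bernstein expansion in ?y, w and ?v, which range over [0, 1]\<close>
  have "0 \<le>
      (1 - ?y)^3 * (1 - w)^5
        * (2 * (1 - ?v)^4 + 31/4 * ?v * (1 - ?v)^3 + 45/4 * ?v^2 * (1 - ?v)^2 + 29/4 * ?v^3 * (1 - ?v) + 7/4 * ?v^4)
    + (1 - ?y)^3 * w * (1 - w)^4
        * (10 * (1 - ?v)^4 + 599/16 * ?v * (1 - ?v)^3 + 837/16 * ?v^2 * (1 - ?v)^2 + 517/16 * ?v^3 * (1 - ?v) + 119/16 * ?v^4)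
    + (1 - ?y)^3 * w^2 * (1 - w)^3
        * (20 * (1 - ?v)^4 + 289/4 * ?v * (1 - ?v)^3 + 387/4 * ?v^2 * (1 - ?v)^2 + 227/4 * ?v^3 * (1 - ?v) + 49/4 * ?v^4)
    + (1 - ?y)^3 * w^3 * (1 - w)^2
        * (20 * (1 - ?v)^4 + 557/8 * ?v * (1 - ?v)^3 + 711/8 * ?v^2 * (1 - ?v)^2 + 391/8 * ?v^3 * (1 - ?v) + 77/8 * ?v^4)
    + (1 - ?y)^3 * w^4 * (1 - w)
        * (10 * (1 - ?v)^4 + 67/2 * ?v * (1 - ?v)^3 + 81/2 * ?v^2 * (1 - ?v)^2 + 41/2 * ?v^3 * (1 - ?v) + 7/2 * ?v^4)
    + (1 - ?y)^3 * w^5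
        * (2 * (1 - ?v)^4 + 103/16 * ?v * (1 - ?v)^3 + 117/16 * ?v^2 * (1 - ?v)^2 + 53/16 * ?v^3 * (1 - ?v) + 7/16 * ?v^4)
    + ?y * (1 - ?y)^2 * (1 - w)^5
        * (22/3 * (1 - ?v)^4 + 341/12 * ?v * (1 - ?v)^3 + 165/4 * ?v^2 * (1 - ?v)^2 + 319/12 * ?v^3 * (1 - ?v) + 77/12 * ?v^4)
    + ?y * (1 - ?y)^2 * w * (1 - w)^4
        * (358/11 * (1 - ?v)^4 + 21437/176 * ?v * (1 - ?v)^3 + 29943/176 * ?v^2 * (1 - ?v)^2 + 18487/176 * ?v^3 * (1 - ?v) + 4253/176 * ?v^4)
    + ?y * (1 - ?y)^2 * w^2 * (1 - w)^3
        * (1924/33 * (1 - ?v)^4 + 1265/6 * ?v * (1 - ?v)^3 + 6219/22 * ?v^2 * (1 - ?v)^2 + 10961/66 * ?v^3 * (1 - ?v) + 2371/66 * ?v^4)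
    + ?y * (1 - ?y)^2 * w^3 * (1 - w)^2
        * (1748/33 * (1 - ?v)^4 + 48959/264 * ?v * (1 - ?v)^3 + 83865/352 * ?v^2 * (1 - ?v)^2 + 69713/528 * ?v^3 * (1 - ?v) + 2521/96 * ?v^4)
    + ?y * (1 - ?y)^2 * w^4 * (1 - w)
        * (270/11 * (1 - ?v)^4 + 3675/44 * ?v * (1 - ?v)^3 + 18081/176 * ?v^2 * (1 - ?v)^2 + 4671/88 * ?v^3 * (1 - ?v) + 1641/176 * ?v^4)
    + ?y * (1 - ?y)^2 * w^5
        * (14/3 * (1 - ?v)^4 + 745/48 * ?v * (1 - ?v)^3 + 585/32 * ?v^2 * (1 - ?v)^2 + 26/3 * ?v^3 * (1 - ?v) + 119/96 * ?v^4)
    + ?y^2 * (1 - ?y) * (1 - w)^5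
        * (26/3 * (1 - ?v)^4 + 403/12 * ?v * (1 - ?v)^3 + 195/4 * ?v^2 * (1 - ?v)^2 + 377/12 * ?v^3 * (1 - ?v) + 91/12 * ?v^4)
    + ?y^2 * (1 - ?y) * w * (1 - w)^4
        * (386/11 * (1 - ?v)^4 + 207259/1584 * ?v * (1 - ?v)^3 + 288361/1584 * ?v^2 * (1 - ?v)^2 + 177281/1584 * ?v^3 * (1 - ?v) + 40595/1584 * ?v^4)
    + ?y^2 * (1 - ?y) * w^2 * (1 - w)^3
        * (1868/33 * (1 - ?v)^4 + 7325/36 * ?v * (1 - ?v)^3 + 53675/198 * ?v^2 * (1 - ?v)^2 + 62639/396 * ?v^3 * (1 - ?v) + 3362/99 * ?v^4)
    + ?y^2 * (1 - ?y) * w^3 * (1 - w)^2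
        * (1516/33 * (1 - ?v)^4 + 14053/88 * ?v * (1 - ?v)^3 + 71733/352 * ?v^2 * (1 - ?v)^2 + 19749/176 * ?v^3 * (1 - ?v) + 2129/96 * ?v^4)
    + ?y^2 * (1 - ?y) * w^4 * (1 - w)
        * (210/11 * (1 - ?v)^4 + 6379/99 * ?v * (1 - ?v)^3 + 62519/792 * ?v^2 * (1 - ?v)^2 + 129127/3168 * ?v^3 * (1 - ?v) + 22699/3168 * ?v^4)
    + ?y^2 * (1 - ?y) * w^5
        * (10/3 * (1 - ?v)^4 + 1577/144 * ?v * (1 - ?v)^3 + 3727/288 * ?v^2 * (1 - ?v)^2 + 1793/288 * ?v^3 * (1 - ?v) + 65/72 * ?v^4)
    + ?y^3 * (1 - w)^5
        * (10/3 * (1 - ?v)^4 + 155/12 * ?v * (1 - ?v)^3 + 75/4 * ?v^2 * (1 - ?v)^2 + 145/12 * ?v^3 * (1 - ?v) + 35/12 * ?v^4)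
    + ?y^3 * w * (1 - w)^4
        * (138/11 * (1 - ?v)^4 + 73627/1584 * ?v * (1 - ?v)^3 + 101737/1584 * ?v^2 * (1 - ?v)^2 + 62081/1584 * ?v^3 * (1 - ?v) + 14099/1584 * ?v^4)
    + ?y^3 * w^2 * (1 - w)^3
        * (604/33 * (1 - ?v)^4 + 584/9 * ?v * (1 - ?v)^3 + 33721/396 * ?v^2 * (1 - ?v)^2 + 9673/198 * ?v^3 * (1 - ?v) + 4073/396 * ?v^4)
    + ?y^3 * w^3 * (1 - w)^2
        * (428/33 * (1 - ?v)^4 + 11581/264 * ?v * (1 - ?v)^3 + 32495/594 * ?v^2 * (1 - ?v)^2 + 34999/1188 * ?v^3 * (1 - ?v) + 1225/216 * ?v^4)
    + ?y^3 * w^4 * (1 - w)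
        * (50/11 * (1 - ?v)^4 + 5707/396 * ?v * (1 - ?v)^3 + 81143/4752 * ?v^2 * (1 - ?v)^2 + 81793/9504 * ?v^3 * (1 - ?v) + 13891/9504 * ?v^4)
    + ?y^3 * w^5
        * (2/3 * (1 - ?v)^4 + 269/144 * ?v * (1 - ?v)^3 + 221/108 * ?v^2 * (1 - ?v)^2 + 823/864 * ?v^3 * (1 - ?v) + 53/432 * ?v^4)"
    using assms by (intro add_nonneg_nonneg mult_nonneg_nonneg zero_le_power; simp)
  also have "\<dots> = (2 - m/2 - 9*m*w/8)
        * (2 * (1 + u - 2*u*w - 4*u*w*a + 2*a + 4*a\<^sup>2) * (1 - 2*a + 3/2*a*w) - 1 - 24/11*(1 - w)*u*w)
      - 3/2 * w * m * (1 - a)"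
    unfolding a_def by algebra
  finally show ?thesis by simp
qed

lemma one_sub_power_mult_le:
  fixes a :: real
  assumes "0 \<le> a" "a < 1"
  shows "(1 - a) ^ k * (1 + real k * (a / (1 - a))) \<le> 1"
proof -
  have "0 \<le> a / (1 - a)" using assms by simp
  then have "1 + real k * (a / (1 - a)) \<le> (1 + a / (1 - a)) ^ k"
    using Bernoulli_inequality[of "a / (1 - a)" k] by simp
  then have "(1 - a) ^ k * (1 + real k * (a / (1 - a))) \<le> (1 - a) ^ k * (1 + a / (1 - a)) ^ k"
    using assms by (intro mult_left_mono) simp_all
  also have "\<dots> = 1" using assms by (simp add: field_simps flip: power_mult_distrib)
  finally show ?thesis .
qed

lemma one_sub_power_le:
  fixes a w :: real and n :: nat
  assumes "0 < a" "a \<le> 1/6" "0 \<le> w" "w \<le> 1" "2 \<le> n"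
  defines "P \<equiv> ((1 - a * (1 - 3*w/4)) * (1 - a) ^ (n - 1))\<^sup>2"
  shows "1 - (1 - a) ^ (2 * n) \<le> (1 - P) * (1 + 3/2 * w * (1 - a) / (2 * real n - 1/2 - 9*w/8))"
proof -
  define g where "g = 1 - 3*w/4"
  define c where "c = 2*g - a*g\<^sup>2"
  define q where "q = (1 - a) ^ (2 * n - 2)"
  define K0 where "K0 = 2 * real n - 1/2 - 9*w/8"
  have g: "1/4 \<le> g" "g \<le> 1" using assms by (auto simp: g_def)
  have "(n - 1) * 2 = 2 * n - 2" "2 + (2 * n - 2) = 2 * n" using assms(5) by simp_all
  then have q: "((1 - a) ^ (n - 1))\<^sup>2 = q" "(1 - a) ^ (2 * n) = (1 - a)\<^sup>2 * q"
    unfolding q_def by (metis power_mult, metis power_add)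
  have P_eq: "P = (1 - c * a) * q"
    unfolding P_def power_mult_distrib q(1)[symmetric]
    by (simp add: c_def g_def power2_eq_square algebra_simps)
  have "q * (2 * real n - 2) * a \<le> (1 - a) * (1 - q)"
    using one_sub_power_mult_le[of a "2 * n - 2"] assms
    by (simp add: q_def of_nat_diff field_simps)
  moreover have "3/2 - 9*w/8 \<le> c * (1 - a)"
  proof -
    have "(2 - a) * (1 - a) = 2 - 3*a + a*a" by (simp add: algebra_simps)
    then have "3/2 \<le> (2 - a) * (1 - a)" using assms(2) zero_le_square[of a] by linarith
    have "3/2 - 9*w/8 = g * (3/2)" by (simp add: g_def)
    also have "\<dots> \<le> g * ((2 - a) * (1 - a))"
      using g \<open>3/2 \<le> (2 - a) * (1 - a)\<close> by (intro mult_left_mono) auto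
    also have "\<dots> = g * (2 - a) * (1 - a)" by (simp add: mult.assoc)
    also have "\<dots> \<le> c * (1 - a)"
      using g assms(1,2) mult_left_mono[of g 1 "a * g"]
      by (intro mult_right_mono) (simp_all add: c_def power2_eq_square algebra_simps)
    finally show ?thesis .
  qed
  moreover have "0 \<le> q * a" using assms by (simp add: q_def)
  ultimately have qa: "q * a * K0 \<le> (1 - a) * (1 - P)"
    unfolding K0_def P_eq using mult_left_mono[of "3/2 - 9*w/8" "c * (1 - a)" "q * a"]
    by (simp add: algebra_simps)
  have "2 - a - c = 2 * (1 - g) - a * (1 - g\<^sup>2)" by (simp add: c_def power2_eq_square algebra_simps)
  moreover have "0 \<le> a * (1 - g\<^sup>2)" using g assms(1) by (simp add: power_le_one)
  moreover have "P - (1 - a) ^ (2 * n) = q * a * (2 - a - c)"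
    unfolding P_eq q(2) by (simp add: power2_eq_square algebra_simps)
  ultimately have "P - (1 - a) ^ (2 * n) \<le> 3/2 * w * (q * a)"
    using \<open>0 \<le> q * a\<close> mult_left_mono[of "2 - a - c" "3/2 * w" "q * a"]
    by (simp add: g_def algebra_simps)
  also have "\<dots> \<le> 3/2 * w * ((1 - a) * (1 - P) / K0)"
    using qa assms by (intro mult_left_mono) (simp_all add: K0_def pos_le_divide_eq)
  finally show ?thesis by (simp add: K0_def algebra_simps)
qed

lemma exp_mult_power_ge:
  fixes a u w :: real and n :: nat
  assumes "0 < a" "a \<le> 1/2" "1 \<le> n" "real n * a = u * w"
  shows "1 + u - 2*u*w - 4*u*w*a + 2*a + 4*a\<^sup>2 \<le> exp u * (1 - a) ^ (2 * n - 2)"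
proof -
  define k where "k = 2 * real n - 2"
  have "k * (- a - 2 * a\<^sup>2) \<le> k * ln (1 - a)"
    using assms by (intro mult_left_mono ln_one_minus_pos_lower_bound) (auto simp: k_def)
  moreover have "k * (- a - 2 * a\<^sup>2) = - 2*u*w - 4*u*w*a + 2*a + 4*a\<^sup>2"
  proof -
    have ka: "k * a = 2 * (u * w) - 2 * a" using assms(4) by (simp add: k_def algebra_simps)
    have "k * (- a - 2 * a\<^sup>2) = - (k * a) - 2 * a * (k * a)"
      by (simp add: power2_eq_square algebra_simps)
    also have "\<dots> = - (2 * (u * w) - 2 * a) - 2 * a * (2 * (u * w) - 2 * a)" unfolding ka ..
    finally show ?thesis by (simp add: power2_eq_square algebra_simps)
  qed
  moreover have "1 + (u + k * ln (1 - a)) \<le> exp (u + k * ln (1 - a))" by (rule exp_ge_add_one_self)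
  moreover have "k = real (2 * n - 2)" using assms(3) by (simp add: k_def of_nat_diff)
  then have "exp (k * ln (1 - a)) = (1 - a) ^ (2 * n - 2)"
    using assms(1,2) by (simp add: ln_realpow[symmetric])
  ultimately show ?thesis by (simp add: exp_add)
qed

lemma exp_mult_square_ge:
  fixes a w u :: real and n :: nat
  assumes "0 < a" "a \<le> 1/2" "0 \<le> w" "1 \<le> n" "real n * a = u * w"
  defines "P \<equiv> ((1 - a * (1 - 3*w/4)) * (1 - a) ^ (n - 1))\<^sup>2"
  shows "(1 + u - 2*u*w - 4*u*w*a + 2*a + 4*a\<^sup>2) * (1 - 2*a + 3/2*a*w) \<le> exp u * P"
proof (cases "0 \<le> 1 + u - 2*u*w - 4*u*w*a + 2*a + 4*a\<^sup>2")
  case True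
  have "(1 - a * (1 - 3*w/4))\<^sup>2 = (1 - 2*a + 3/2*a*w) + (a * (1 - 3*w/4))\<^sup>2"
    by (simp add: power2_eq_square algebra_simps)
  then have "1 - 2*a + 3/2*a*w \<le> (1 - a * (1 - 3*w/4))\<^sup>2" by simp
  moreover have "0 \<le> 1 - 2*a + 3/2*a*w" "0 \<le> exp u * (1 - a) ^ (2 * n - 2)" using assms by simp_all
  ultimately have "(1 + u - 2*u*w - 4*u*w*a + 2*a + 4*a\<^sup>2) * (1 - 2*a + 3/2*a*w)
      \<le> (exp u * (1 - a) ^ (2 * n - 2)) * (1 - a * (1 - 3*w/4))\<^sup>2"
    using True exp_mult_power_ge[OF assms(1,2,4,5)] by (intro mult_mono)
  also have "\<dots> = exp u * P"
  proof -
    have "P = (1 - a * (1 - 3*w/4))\<^sup>2 * (1 - a) ^ (2 * n - 2)"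
      unfolding P_def power_mult_distrib using assms(4)
      by (simp flip: power_mult) (simp add: mult.commute right_diff_distrib')
    then show ?thesis by (simp add: ac_simps)
  qed
  finally show ?thesis .
next
  case False
  moreover have "0 \<le> 1 - 2*a + 3/2*a*w" using assms by simp
  ultimately have "(1 + u - 2*u*w - 4*u*w*a + 2*a + 4*a\<^sup>2) * (1 - 2*a + 3/2*a*w) \<le> 0"
    by (simp add: mult_nonpos_nonneg)
  moreover have "0 \<le> exp u * P" by (simp add: P_def)
  ultimately show ?thesis by linarith
qed

lemma one_sub_power_mult_div_le:
  fixes a w :: real and n :: nat
  assumes "0 \<le> a" "a \<le> 1/6" "w \<le> 1"
  shows "(1 - (1 - a) ^ (2 * n)) * (2 * (1 - w) / (2 - a)) \<le> 24/11 * (1 - w) * (real n * a)"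
proof -
  have "0 \<le> 1 - (1 - a) ^ (2 * n)" "1 - (1 - a) ^ (2 * n) \<le> 2 * (real n * a)"
    using Bernoulli_inequality[of "- a" "2 * n"] assms by (simp_all add: power_le_one)
  moreover have "2 * (1 - w) / (2 - a) \<le> 12/11 * (1 - w)"
    using assms mult_left_mono[of "2 / (2 - a)" "12/11" "1 - w"] by (simp add: field_simps)
  ultimately have "(1 - (1 - a) ^ (2 * n)) * (2 * (1 - w) / (2 - a)) \<le> (2 * (real n * a)) * (12/11 * (1 - w))"
    using assms by (intro mult_mono) simp_all
  then show ?thesis by (simp add: algebra_simps)
qed

lemma sgld_core_inequality:
  fixes a w u :: real and n :: nat
  assumes "0 < a" "0 < w" "w < 1" "0 < u" "u \<le> 1/3" "2 \<le> n" "real n * a = u * w"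
  defines "P \<equiv> ((1 - a * (1 - 3*w/4)) * (1 - a) ^ (n - 1))\<^sup>2"
  shows "(1 - (1 - a) ^ (2 * n)) * (1 + 2 * (1 - w) / (2 - a) * (1 - P)) \<le> 2 * exp u * P * (1 - P)"
proof -
  define m where "m = 1 / real n"
  define S1 where "S1 = 3/2 * w * m * (1 - a) / (2 - m/2 - 9*m*w/8)"
  define S2 where "S2 = 24/11 * (1 - w) * u * w"
  have n: "2 \<le> real n" using assms(6) by simp
  have "u * w \<le> 1/3" using assms(2-5) mult_mono[of u "1/3" w 1] by simp
  moreover have "2 * a \<le> real n * a" using n assms(1) by (intro mult_right_mono) auto
  ultimately have a: "a \<le> 1/6" using assms(7) by linarith
  have m: "0 < m" "m \<le> 1/2" "a = u * w * m" using n assms(7) by (simp_all add: m_def field_simps)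
  have "0 \<le> a * (1 - 3*w/4)" "a * (1 - 3*w/4) \<le> a" using assms(1-3) by (simp_all add: mult_left_le)
  then have "0 \<le> 1 - a * (1 - 3*w/4)" "1 - a * (1 - 3*w/4) \<le> 1" using a by linarith+
  moreover have "(1 - a) ^ (n - 1) \<le> 1" using assms(1) a by (simp add: power_le_one)
  ultimately have "0 \<le> 1 - P" unfolding P_def using assms(1) a by (simp add: power_le_one mult_le_one)
  have "2 - m/2 - 9*m*w/8 = m * (2 * real n - 1/2 - 9*w/8)" using n by (simp add: m_def field_simps)
  then have "3/2 * w * (1 - a) / (2 * real n - 1/2 - 9*w/8) = S1" using m(1) by (simp add: S1_def)
  then have T1: "1 - (1 - a) ^ (2 * n) \<le> (1 - P) * (1 + S1)"
    using one_sub_power_le[of a w n] assms a unfolding P_def by simp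
  have T2: "(1 - (1 - a) ^ (2 * n)) * (2 * (1 - w) / (2 - a)) \<le> S2"
    using one_sub_power_mult_div_le[of a w n] assms a by (simp add: S2_def mult.assoc)
  have "m * w \<le> 1/2" using m assms(2,3) mult_mono[of m "1/2" w 1] by simp
  then have den: "0 < 2 - m/2 - 9*m*w/8" using m by linarith
  have "3/2 * w * m * (1 - a) \<le> (2 - m/2 - 9*m*w/8)
      * (2 * (1 + u - 2*u*w - 4*u*w*a + 2*a + 4*a\<^sup>2) * (1 - 2*a + 3/2*a*w) - 1 - S2)"
    using key_polynomial_inequality[of u w m] assms(2-5) m(1,2) unfolding S2_def m(3) by simp
  then have "S1 \<le> 2 * (1 + u - 2*u*w - 4*u*w*a + 2*a + 4*a\<^sup>2) * (1 - 2*a + 3/2*a*w) - 1 - S2"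
    unfolding S1_def pos_divide_le_eq[OF den] by (metis mult.commute)
  then have "1 + S1 + S2 \<le> 2 * ((1 + u - 2*u*w - 4*u*w*a + 2*a + 4*a\<^sup>2) * (1 - 2*a + 3/2*a*w))"
    by (simp only: mult.assoc)
  also have "\<dots> \<le> 2 * (exp u * P)"
    using exp_mult_square_ge[of a w n u] assms a unfolding P_def by simp
  finally have poly: "1 + S1 + S2 \<le> 2 * exp u * P" by simp
  have "(1 - (1 - a) ^ (2 * n)) * (1 + 2 * (1 - w) / (2 - a) * (1 - P))
      = (1 - (1 - a) ^ (2 * n)) + (1 - (1 - a) ^ (2 * n)) * (2 * (1 - w) / (2 - a)) * (1 - P)"
    by (simp add: algebra_simps)
  also have "\<dots> \<le> (1 - P) * (1 + S1 + S2)"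
    using add_mono[OF T1 mult_right_mono[OF T2 \<open>0 \<le> 1 - P\<close>]] by (simp add: algebra_simps)
  also have "\<dots> \<le> (1 - P) * (2 * exp u * P)" using poly \<open>0 \<le> 1 - P\<close> by (rule mult_left_mono)
  finally show ?thesis by (simp add: algebra_simps)
qed

(* t stands for xh^2 beta; eta, lam and lam_hat are sgld_eta, sgld_lambda and sgld_lambda_hat
   in closed form, and K is the nat-ceiling of k-dot. *)
locale sgld_constants =
  fixes \<alpha> t :: real and n :: nat
  assumes alpha_pos: "0 < \<alpha>" and t_gt_3: "3 < t" and n_ge_2: "2 \<le> n"
begin

definition A :: real where "A = \<alpha> + real n * t"

definition eta :: real where "eta = 2 / A\<^sup>2"

definition lam :: real where "lam = 1 - 1 / A"

definition lam_hat :: real where "lam_hat = 1 - (\<alpha> + real n * t / 4) / A\<^sup>2"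

definition K :: nat where
  "K = nat \<lceil>1 / (2 * real n) * log lam (1 / (1 + 1 / (\<alpha> * eta) * (1 - lam\<^sup>2))) - 1\<rceil>"

lemma A_gt_6: "6 < A"
proof -
  have "2 * t \<le> real n * t" using n_ge_2 t_gt_3 by (intro mult_right_mono) auto
  then show ?thesis using alpha_pos t_gt_3 unfolding A_def by linarith
qed

lemma constants_bounds: "0 < eta" "0 < lam" "lam < 1" "lam \<le> lam_hat" "lam_hat \<le> 1"
proof -
  have A_pos: "0 < A" "A \<noteq> 0" using A_gt_6 by simp_all
  show "0 < eta" "0 < lam" "lam < 1" using A_gt_6 by (simp_all add: eta_def lam_def field_simps)
  have "0 \<le> real n * t" using t_gt_3 by simp
  then show "lam_hat \<le> 1" using alpha_pos by (simp add: lam_hat_def)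
  have "lam_hat - lam = (A - (\<alpha> + real n * t / 4)) / A\<^sup>2"
    using A_pos by (simp add: lam_hat_def lam_def power2_eq_square field_simps)
  also have "A - (\<alpha> + real n * t / 4) = 3/4 * (real n * t)" by (simp add: A_def)
  finally have "lam_hat - lam = 3/4 * (real n * t) / A\<^sup>2" .
  moreover have "0 \<le> 3/4 * (real n * t) / A\<^sup>2" using \<open>0 \<le> real n * t\<close> by simp
  ultimately show "lam \<le> lam_hat" by linarith
qed

lemma start_bound:
  "1 / (1 + 1 / (\<alpha> * eta) * (1 - lam\<^sup>2)) \<le> (lam_hat * lam ^ (n - 1)) ^ (2 * K)"
proof -
  note c = constants_bounds
  have "0 < 1 / (\<alpha> * eta) * (1 - lam\<^sup>2)"
    using c alpha_pos by (simp add: power_less_one_iff)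
  then have "1 / (1 + 1 / (\<alpha> * eta) * (1 - lam\<^sup>2)) \<le> lam ^ (2 * n * K)"
    unfolding K_def using c n_ge_2 by (intro le_power_nat_ceiling_log) auto
  also have "\<dots> = (lam ^ n) ^ (2 * K)" by (simp add: ac_simps flip: power_mult)
  also have "\<dots> = (lam * lam ^ (n - 1)) ^ (2 * K)" using n_ge_2 by (simp flip: power_Suc)
  also have "\<dots> \<le> (lam_hat * lam ^ (n - 1)) ^ (2 * K)"
    using c by (intro power_mono mult_right_mono) auto
  finally show ?thesis .
qed

lemma first_position_key:
  "var_seq (\<lambda>_. lam) 0 1 n * (\<alpha> * eta + 1 - lam\<^sup>2 - (lam_hat * lam ^ (n - 1))\<^sup>2 * \<alpha> * eta)
     \<le> 2 * exp (1 / t) * (lam_hat * lam ^ (n - 1))\<^sup>2 * (1 - (lam_hat * lam ^ (n - 1))\<^sup>2)"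
proof -
  define a where "a = 1 / A"
  define w where "w = real n * t / A"
  define P where "P = (lam_hat * lam ^ (n - 1))\<^sup>2"
  have A_pos: "0 < A" using A_gt_6 by simp
  have n: "2 \<le> real n" using n_ge_2 by simp
  have "0 < a" "0 < w" "w < 1" "real n * a = 1 / t * w"
    using A_pos alpha_pos t_gt_3 n by (simp_all add: a_def w_def A_def field_simps)
  moreover have lam_a: "lam = 1 - a" "lam_hat = 1 - a * (1 - 3*w/4)" "\<alpha> * eta = 2 * (1 - w) * a"
    using A_pos by (simp_all add: a_def w_def lam_def lam_hat_def eta_def A_def power2_eq_square field_simps)
  ultimately have core: "(1 - lam ^ (2 * n)) * (1 + 2 * (1 - w) / (2 - a) * (1 - P))
      \<le> 2 * exp (1 / t) * P * (1 - P)"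
    using sgld_core_inequality[of a w "1 / t" n] t_gt_3 n_ge_2 by (simp add: P_def)
  have "a < 1" using A_gt_6 by (simp add: a_def)
  have "var_seq (\<lambda>_. lam) 0 1 n * (\<alpha> * eta + 1 - lam\<^sup>2 - P * \<alpha> * eta)
      = (var_seq (\<lambda>_. lam) 0 1 n * (1 - lam\<^sup>2)) * (1 + 2 * (1 - w) / (2 - a) * (1 - P))"
    using \<open>0 < a\<close> \<open>a < 1\<close> unfolding mult.assoc[of P] lam_a
    by (simp add: power2_eq_square field_simps)
  also have "\<dots> \<le> 2 * exp (1 / t) * P * (1 - P)" unfolding var_seq_const by (rule core)
  finally show ?thesis by (simp add: P_def)
qed

lemma first_position_bound:
  "var_seq (cyclic_factor n 1 lam_hat lam) (1 / \<alpha>) eta (K * n + n)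
     \<le> (1 + 2 * exp (1 / t)) * (lam_hat * lam ^ (n - 1))\<^sup>2 * (1 / \<alpha>) * (lam_hat * lam ^ (n - 1)) ^ (2 * K)"
proof -
  have "var_seq (cyclic_factor n 1 lam_hat lam) 0 1 n = var_seq (\<lambda>_. lam) 0 1 n"
    by (rule cyclic_first_variance) simp
  then show ?thesis
    using constants_bounds alpha_pos n_ge_2 start_bound first_position_key
    by (intro cyclic_variance_bound) simp_all
qed

lemma later_position_key:
  assumes "r \<in> {2..n}"
  shows "var_seq (cyclic_factor n r lam_hat lam) 0 1 n
           * (\<alpha> * eta + 1 - lam\<^sup>2 - (lam_hat * lam ^ (n - 1))\<^sup>2 * \<alpha> * eta)
         \<le> (6 / lam\<^sup>2 - 1) * (lam_hat * lam ^ (n - 1))\<^sup>2 * (1 - (lam_hat * lam ^ (n - 1))\<^sup>2)"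
proof -
  note c = constants_bounds
  define P where "P = (lam_hat * lam ^ (n - 1))\<^sup>2"
  define D where "D = \<alpha> * eta + 1 - lam\<^sup>2 - P * \<alpha> * eta"
  have lam2: "0 < lam\<^sup>2" "lam\<^sup>2 \<le> 1" using c by (simp_all add: power_le_one)
  have "P \<le> 1" using c by (simp add: P_def power_le_one mult_le_one)
  then have "P * (\<alpha> * eta) \<le> \<alpha> * eta" using c alpha_pos mult_right_mono[of P 1 "\<alpha> * eta"] by simp
  then have "0 \<le> D" using lam2 by (simp add: D_def mult.assoc)
  have "lam\<^sup>2 * var_seq (cyclic_factor n r lam_hat lam) 0 1 n \<le> var_seq (\<lambda>_. lam) 0 1 n"
    using c assms by (intro cyclic_variance_le) (simp_all add: power_le_one)
  then have "var_seq (cyclic_factor n r lam_hat lam) 0 1 n * D \<le> var_seq (\<lambda>_. lam) 0 1 n * D / lam\<^sup>2"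
    using \<open>0 \<le> D\<close> lam2 by (simp add: field_simps mult_left_mono)
  also have "\<dots> \<le> 2 * exp (1 / t) * P * (1 - P) / lam\<^sup>2"
    using first_position_key lam2 by (intro divide_right_mono) (simp_all add: P_def D_def)
  also have "\<dots> = 2 * exp (1 / t) / lam\<^sup>2 * (P * (1 - P))" by simp
  also have "\<dots> \<le> (6 / lam\<^sup>2 - 1) * (P * (1 - P))"
  proof (rule mult_right_mono)
    have "2 * exp (1 / t) \<le> 6 - lam\<^sup>2"
      using exp_le_five_halves[of "1 / t"] t_gt_3 lam2 by simp
    then show "2 * exp (1 / t) / lam\<^sup>2 \<le> 6 / lam\<^sup>2 - 1" using lam2 by (simp add: field_simps)
    show "0 \<le> P * (1 - P)" using \<open>P \<le> 1\<close> by (simp add: P_def)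
  qed
  finally show ?thesis by (simp only: P_def D_def mult.assoc)
qed

lemma later_position_bound:
  assumes "r \<in> {2..n}"
  shows "var_seq (cyclic_factor n r lam_hat lam) (1 / \<alpha>) eta (K * n + n)
     \<le> 6 * (lam_hat * lam ^ (n - r))\<^sup>2 * (1 / \<alpha>) * (lam_hat * lam ^ (n - 1)) ^ (2 * K)"
proof -
  note c = constants_bounds
  have lam2: "0 < lam\<^sup>2" "lam\<^sup>2 \<le> 1" using c by (simp_all add: power_le_one)
  then have "0 \<le> 6 / lam\<^sup>2 - 1" by (simp add: field_simps)
  with c have "var_seq (cyclic_factor n r lam_hat lam) (1 / \<alpha>) eta (K * n + n)
      \<le> (1 + (6 / lam\<^sup>2 - 1)) * (lam_hat * lam ^ (n - 1))\<^sup>2 * (1 / \<alpha>)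
         * (lam_hat * lam ^ (n - 1)) ^ (2 * K)"
    using alpha_pos n_ge_2 assms start_bound later_position_key[OF assms]
    by (intro cyclic_variance_bound) auto
  also have "\<dots> = 6 * ((lam_hat * lam ^ (n - 1))\<^sup>2 / lam\<^sup>2) * (1 / \<alpha>)
                    * (lam_hat * lam ^ (n - 1)) ^ (2 * K)"
    by simp
  also have "\<dots> \<le> 6 * (lam_hat * lam ^ (n - r))\<^sup>2 * (1 / \<alpha>) * (lam_hat * lam ^ (n - 1)) ^ (2 * K)"
    using square_mult_power_le[of lam lam_hat r n] c assms lam2 alpha_pos
    by (intro mult_right_mono mult_left_mono) (simp_all add: pos_divide_le_eq)
  finally show ?thesis .
qed

end

theorem lemmaA4:
  fixes \<alpha> \<beta> xh c :: real and n :: nat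
    and M :: "'w measure" and \<theta>0 :: "'w \<Rightarrow> real" and \<xi> :: "nat \<Rightarrow> 'w \<Rightarrow> real"
  assumes pos: "\<alpha> > 0" "\<beta> > 0" "xh > 0" "c > 0" and n2: "n \<ge> 2"
    and M: "prob_space M"
    and init: "distributed M lborel \<theta>0 (normal_density 0 (1 / sqrt \<alpha>))"
    and noise: "\<And>j. distributed M lborel (\<xi> j) (normal_density 0 1)"
    and indep: "prob_space.indep_vars M (\<lambda>_. borel)
                  (\<lambda>i. case i of None \<Rightarrow> \<theta>0 | Some j \<Rightarrow> \<xi> j) UNIV"
    and hx: "xh\<^sup>2 * \<beta> > 3"
    and hn: "real n > 1 / (2 * \<alpha> * xh\<^sup>2 * \<beta>) - 1 / (xh\<^sup>2 * \<beta>)"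
  shows "let \<eta> = sgld_eta \<alpha> \<beta> xh n; lam = sgld_lambda \<alpha> \<beta> xh n;
             lamh = sgld_lambda_hat \<alpha> \<beta> xh n;
             kdot = 1 / (2 * real n) * log lam (1 / (1 + 1 / (\<alpha> * \<eta>) * (1 - lam\<^sup>2))) - 1;
             K = nat \<lceil>kdot\<rceil>;
             var = (\<lambda>r. prob_space.variance M
                      (\<lambda>\<omega>. sgld_iter \<alpha> \<beta> xh c n r (\<theta>0 \<omega>) (\<lambda>j. \<xi> j \<omega>) (K * n + n)))
         in var 1 \<le> (1 + 2 * exp (1 / (xh\<^sup>2 * \<beta>))) * (lamh * lam ^ (n - 1))\<^sup>2 * (1 / \<alpha>)
                        * (lamh * lam ^ (n - 1)) ^ (2 * K)
            \<and> (\<forall>r \<in> {2..n}. var r \<le> 6 * (lamh * lam ^ (n - r))\<^sup>2 * (1 / \<alpha>)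
                        * (lamh * lam ^ (n - 1)) ^ (2 * K))"
proof -
  interpret sgld_constants \<alpha> "xh\<^sup>2 * \<beta>" n
    using pos n2 hx by unfold_locales auto
  have A_eq: "\<alpha> + real n * xh\<^sup>2 * \<beta> = A" by (simp add: A_def mult.assoc)
  have sgld_params: "sgld_eta \<alpha> \<beta> xh n = eta" "sgld_lambda \<alpha> \<beta> xh n = lam"
    "sgld_lambda_hat \<alpha> \<beta> xh n = lam_hat"
    using A_gt_6 unfolding sgld_eta_def sgld_lambda_def sgld_lambda_hat_def A_eq eta_def lam_def lam_hat_def
    by (simp_all add: power2_eq_square field_simps A_def)
  have var: "prob_space.variance M (\<lambda>\<omega>. sgld_iter \<alpha> \<beta> xh c n r (\<theta>0 \<omega>) (\<lambda>j. \<xi> j \<omega>) N)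
      = var_seq (cyclic_factor n r lam_hat lam) (1 / \<alpha>) eta N" for r N
    using sgld_variance[OF pos(1) M init noise indep] by (simp add: sgld_params)
  show ?thesis
    using first_position_bound later_position_bound
    unfolding Let_def sgld_params var K_def[symmetric] by (simp add: mult.assoc)
qed

end
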